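(* Let $\mathcal{X}\subseteq\mathbb{R}^d$ be an open convex domain, $p\in\mathcal{X}$ a site, $f_p:\mathcal{X}\to\mathbb{R}^+$ a $\tau$-admissible distance function, and $B\subset\mathcal{X}$ a Euclidean ball. If $B$ and $p$ are $(\tau\kappa)$-separated for some $\kappa>1$, then (i) $f_p^+(B)\le f_p^-(B)\,\kappa/(\kappa-1)$; (ii) $\|\nabla f_p^+(B)\|\le f_p^+(B)/(\kappa\cdot\mathrm{diam}(B))$; (iii) $\|\nabla^2 f_p^+(B)\|\le f_p^+(B)/(\kappa\cdot\mathrm{diam}(B))^2$.
   Context: $f_p$ has a well-defined gradient and Hessian on $\mathcal{X}$ (at least on $B$). $f_p$ is $\tau$-admissible if for all $x\in\mathcal{X}$: $\|\nabla f_p(x)\|\,\|x-p\|\le\tau f_p(x)$ and $\|\nabla^2 f_p(x)\|\,\|x-p\|^2\le\tau^2 f_p(x)$ (Euclidean norm, spectral norm for matrices). $B$ and $p$ are $\beta$-separated if $\mathrm{dist}(p,B)/\mathrm{diam}(B)\ge\beta$, with $\mathrm{dist}$ the minimum Euclidean distance. $f^+(B)$, $f^-(B)$ denote the maximum and minimum of $f$ on $B$; $\|\nabla f^+(B)\|$ and $\|\nabla^2 f^+(B)\|$ denote the maxima over $x\in B$ of $\|\nabla f(x)\|$ and $\|\nabla^2 f(x)\|$. *)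

theory Defs
  imports "HOL-Analysis.Analysis"
begin

text \<open>Gradient and Hessian of f on X are given as functions grad and hess, characterised
  by the derivative relations below (they are then uniquely determined).
  The spectral norm of the (symmetric) Hessian is its operator norm onorm.\<close>

definition has_grad_hess_on ::
  "('a::euclidean_space \<Rightarrow> real) \<Rightarrow> ('a \<Rightarrow> 'a) \<Rightarrow> ('a \<Rightarrow> 'a \<Rightarrow> 'a) \<Rightarrow> 'a set \<Rightarrow> bool" where
  "has_grad_hess_on f grad hess X \<longleftrightarrow>
     (\<forall>x\<in>X. (f has_derivative (\<lambda>h. grad x \<bullet> h)) (at x) \<and>
             (grad has_derivative hess x) (at x))"

definition tau_admissible ::
  "real \<Rightarrow> ('a::euclidean_space \<Rightarrow> real) \<Rightarrow> ('a \<Rightarrow> 'a) \<Rightarrow> ('a \<Rightarrow> 'a \<Rightarrow> 'a) \<Rightarrow> 'a \<Rightarrow> 'a set \<Rightarrow> bool" where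
  "tau_admissible \<tau> f grad hess p X \<longleftrightarrow>
     (\<forall>x\<in>X. norm (grad x) * norm (x - p) \<le> \<tau> * f x \<and>
             onorm (hess x) * norm (x - p)^2 \<le> \<tau>^2 * f x)"

definition separated :: "real \<Rightarrow> 'a::euclidean_space set \<Rightarrow> 'a \<Rightarrow> bool" where
  "separated \<beta> B p \<longleftrightarrow> infdist p B / diameter B \<ge> \<beta>"

end

theory Submission
  imports Defs
begin

text \<open>Every point of the ball lies at distance at least \<open>\<tau> \<kappa> diam B\<close> from the site, so
  admissibility bounds the gradient by \<open>f\<^sup>+(B) / (\<kappa> diam B)\<close> and the Hessian by the square of
  that factor. The mean value theorem then bounds the oscillation of \<open>f\<close> on \<open>B\<close> by
  \<open>diam B\<close> times the gradient bound, i.e. by \<open>f\<^sup>+(B) / \<kappa>\<close>, which rearranges to (i).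
  For \<open>\<tau> \<le> 0\<close> separation says nothing, but then admissibility forces the gradient to vanish
  off the site, hence everywhere by continuity, and with it the Hessian.\<close>

lemma cSup_le_cInf_add:
  fixes f :: "'a \<Rightarrow> real"
  assumes "S \<noteq> {}" and "\<And>x y. x \<in> S \<Longrightarrow> y \<in> S \<Longrightarrow> f x \<le> f y + \<delta>"
  shows "Sup (f ` S) \<le> Inf (f ` S) + \<delta>"
proof -
  have "Sup (f ` S) - \<delta> \<le> Inf (f ` S)"
  proof (rule cInf_greatest)
    fix v assume "v \<in> f ` S"
    then obtain y where "y \<in> S" "v = f y" by blast
    moreover have "Sup (f ` S) \<le> f y + \<delta>"
      using assms \<open>y \<in> S\<close> by (intro cSup_least) auto
    ultimately show "Sup (f ` S) - \<delta> \<le> v" by simp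
  qed (use assms(1) in simp)
  then show ?thesis by simp
qed

lemma oscillation_le_gradient_bound:
  fixes f :: "'a::real_inner \<Rightarrow> real"
  assumes "convex S" and "bounded S"
    and "\<And>x. x \<in> S \<Longrightarrow> (f has_derivative (\<lambda>h. grad x \<bullet> h)) (at x within S)"
    and "\<And>x. x \<in> S \<Longrightarrow> norm (grad x) \<le> M"
    and "x \<in> S" and "y \<in> S"
  shows "f x \<le> f y + M * diameter S"
proof -
  have "norm (f x - f y) \<le> M * norm (x - y)"
  proof (rule differentiable_bound[OF assms(1,3)])
    fix z assume "z \<in> S"
    have "onorm (\<lambda>h. grad z \<bullet> h) \<le> norm (grad z)"
      by (rule onorm_bound) (auto simp: Cauchy_Schwarz_ineq2)
    then show "onorm (\<lambda>h. grad z \<bullet> h) \<le> M"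
      using assms(4)[OF \<open>z \<in> S\<close>] by linarith
  qed (use assms in auto)
  also have "\<dots> \<le> M * diameter S"
    using diameter_bounded_bound[OF assms(2,5,6)]
      order_trans[OF norm_ge_zero assms(4)[OF \<open>x \<in> S\<close>]] by (intro mult_left_mono) (auto simp: dist_norm)
  finally show ?thesis by simp
qed

lemma admissible_grad_hess_le_far_from_site:
  assumes "tau_admissible \<tau> f grad hess p X" and "x \<in> X"
    and "\<tau> > 0" and "s > 0" and "\<tau> * s \<le> norm (x - p)"
    and "f x \<le> S" and "S \<ge> 0"
  shows "norm (grad x) \<le> S / s \<and> onorm (hess x) \<le> S / s^2"
proof
  have "\<tau> * s > 0" using assms(3,4) by simp
  then have dist_pos: "norm (x - p) > 0" using assms(5) by linarith
  have "norm (grad x) \<le> \<tau> * f x / norm (x - p)"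
    using assms(1,2) dist_pos by (simp add: tau_admissible_def pos_le_divide_eq)
  also have "\<dots> \<le> \<tau> * S / (\<tau> * s)"
    using assms \<open>\<tau> * s > 0\<close> by (intro frac_le mult_left_mono) auto
  finally show "norm (grad x) \<le> S / s" using assms(3) by simp
  have "onorm (hess x) \<le> \<tau>^2 * f x / norm (x - p)^2"
    using assms(1,2) dist_pos by (simp add: tau_admissible_def pos_le_divide_eq)
  also have "\<dots> \<le> \<tau>^2 * S / (\<tau> * s)^2"
    using assms \<open>\<tau> * s > 0\<close> by (intro frac_le mult_left_mono power_mono) auto
  finally show "onorm (hess x) \<le> S / s^2" using assms(3) by (simp add: power_mult_distrib)
qed

lemma admissible_nonpos_grad_hess_vanish:
  assumes "open X" and "\<And>x. x \<in> X \<Longrightarrow> f x \<ge> 0"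
    and "has_grad_hess_on f grad hess X" and "tau_admissible \<tau> f grad hess p X"
    and "\<tau> \<le> 0" and "x \<in> X"
  shows "grad x = 0" and "hess x = (\<lambda>_. 0)"
proof -
  have grad_off_site: "grad y = 0" if "y \<in> X" "y \<noteq> p" for y
  proof -
    have "norm (grad y) * norm (y - p) \<le> \<tau> * f y"
      using assms(4) \<open>y \<in> X\<close> by (simp add: tau_admissible_def)
    also have "\<dots> \<le> 0" using assms(2,5) \<open>y \<in> X\<close> by (simp add: mult_nonpos_nonneg)
    finally show ?thesis using \<open>y \<noteq> p\<close> by (simp add: mult_le_0_iff)
  qed
  have grad_deriv: "(grad has_derivative hess y) (at y)" if "y \<in> X" for y
    using assms(3) that by (simp add: has_grad_hess_on_def)
  have grad_zero: "grad y = 0" if "y \<in> X" for y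
  proof (cases "y = p")
    case True
    have "(grad \<longlongrightarrow> grad p) (at p)"
      using grad_deriv[OF that] True by (auto dest: has_derivative_continuous simp: continuous_at)
    moreover have "\<forall>\<^sub>F z in at p. z \<in> X \<and> z \<noteq> p"
      using eventually_at_in_open[OF assms(1), of p] that True by simp
    then have "(grad \<longlongrightarrow> 0) (at p)"
      by (intro tendsto_eventually, elim eventually_mono) (use grad_off_site in blast)
    ultimately show ?thesis using True tendsto_unique[OF at_neq_bot] by blast
  qed (use grad_off_site that in blast)
  then show "grad x = 0" using assms(6) .
  have "((\<lambda>_. 0) has_derivative hess x) (at x)"
    using has_derivative_transform_within_open[OF grad_deriv[OF assms(6)] assms(1,6)] grad_zero
    by simp
  then show "hess x = (\<lambda>_. 0)" using has_derivative_unique has_derivative_const by blast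
qed

lemma separated_grad_hess_le:
  assumes "open X" and "\<And>x. x \<in> X \<Longrightarrow> f x \<ge> 0"
    and "has_grad_hess_on f grad hess X" and "tau_admissible \<tau> f grad hess p X"
    and "B \<subseteq> X" and "diameter B > 0" and "\<kappa> > 0" and "separated (\<tau> * \<kappa>) B p"
    and "x \<in> B" and "f x \<le> S"
  shows "norm (grad x) \<le> S / (\<kappa> * diameter B) \<and> onorm (hess x) \<le> S / (\<kappa> * diameter B)^2"
proof -
  have "x \<in> X" using assms(5,9) by blast
  then have "S \<ge> 0" using assms(2,10) by force
  show ?thesis
  proof (cases "\<tau> \<le> 0")
    case True
    then have "grad x = 0" and "hess x = (\<lambda>_. 0)"
      using admissible_nonpos_grad_hess_vanish[OF assms(1-4) True \<open>x \<in> X\<close>] by blast+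
    then show ?thesis using \<open>S \<ge> 0\<close> assms(6,7) by (simp add: onorm_zero)
  next
    case False
    have "\<tau> * (\<kappa> * diameter B) \<le> infdist p B"
      using assms(6,8) by (simp add: separated_def pos_le_divide_eq mult.assoc)
    also have "\<dots> \<le> norm (x - p)"
      using infdist_le[OF assms(9)] by (simp add: dist_norm norm_minus_commute)
    finally show ?thesis
      using admissible_grad_hess_le_far_from_site[OF assms(4) \<open>x \<in> X\<close> _ _ _ assms(10)
          \<open>S \<ge> 0\<close>] False assms(6,7) by simp
  qed
qed

theorem lemma2:
  fixes X :: "'a::euclidean_space set" and p c :: 'a and r \<tau> \<kappa> :: real
    and f :: "'a \<Rightarrow> real" and grad :: "'a \<Rightarrow> 'a" and hess :: "'a \<Rightarrow> 'a \<Rightarrow> 'a"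
  assumes "open X" and "convex X" and "p \<in> X"
    and "\<forall>x\<in>X. f x > 0"
    and "has_grad_hess_on f grad hess X"
    and "tau_admissible \<tau> f grad hess p X"
    and "r > 0" and "cball c r \<subseteq> X"
    and "\<kappa> > 1" and "separated (\<tau> * \<kappa>) (cball c r) p"
  shows "Sup (f ` cball c r) \<le> Inf (f ` cball c r) * \<kappa> / (\<kappa> - 1) \<and>
         Sup ((\<lambda>x. norm (grad x)) ` cball c r)
           \<le> Sup (f ` cball c r) / (\<kappa> * diameter (cball c r)) \<and>
         Sup ((\<lambda>x. onorm (hess x)) ` cball c r)
           \<le> Sup (f ` cball c r) / (\<kappa> * diameter (cball c r))^2"
proof -
  define B where "B = cball c r"
  define S where "S = Sup (f ` B)"
  have "B \<subseteq> X" and "c \<in> B" and "convex B" and "compact B" and "diameter B > 0"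
    using assms(7,8) by (auto simp: B_def)
  have f_deriv: "(f has_derivative (\<lambda>h. grad x \<bullet> h)) (at x within B)" if "x \<in> B" for x
    using assms(5) \<open>B \<subseteq> X\<close> that
    by (auto simp: has_grad_hess_on_def intro: has_derivative_at_withinI)
  have "bdd_above (f ` B)"
    using compact_continuous_image[OF has_derivative_continuous_on[OF f_deriv] \<open>compact B\<close>]
    by (auto intro: bounded_imp_bdd_above compact_imp_bounded)
  then have f_le: "f x \<le> S" if "x \<in> B" for x
    using that by (auto simp: S_def intro: cSup_upper)
  have bounds: "norm (grad x) \<le> S / (\<kappa> * diameter B) \<and> onorm (hess x) \<le> S / (\<kappa> * diameter B)^2"
    if "x \<in> B" for x
    using separated_grad_hess_le[OF assms(1) _ assms(5,6) \<open>B \<subseteq> X\<close> \<open>diameter B > 0\<close> _ _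
        that f_le[OF that]] assms(4,9,10) by (simp add: B_def less_imp_le)
  have oscillation: "f x \<le> f y + S / \<kappa>" if "x \<in> B" "y \<in> B" for x y
  proof -
    have "f x \<le> f y + S / (\<kappa> * diameter B) * diameter B"
      using oscillation_le_gradient_bound[OF \<open>convex B\<close> compact_imp_bounded[OF \<open>compact B\<close>]
          f_deriv _ that] bounds by blast
    then show ?thesis using \<open>diameter B > 0\<close> by simp
  qed
  have "Sup (f ` B) \<le> Inf (f ` B) + S / \<kappa>"
    using \<open>c \<in> B\<close> oscillation by (intro cSup_le_cInf_add) auto
  then have "S \<le> Inf (f ` B) * \<kappa> / (\<kappa> - 1)"
    using assms(9) by (simp add: S_def field_simps)
  moreover have "Sup ((\<lambda>x. norm (grad x)) ` B) \<le> S / (\<kappa> * diameter B)"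
    and "Sup ((\<lambda>x. onorm (hess x)) ` B) \<le> S / (\<kappa> * diameter B)^2"
    using bounds \<open>c \<in> B\<close> by (auto intro!: cSup_least)
  ultimately show ?thesis by (simp only: S_def B_def)
qed

end
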